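(* Let $G$ be an abelian group and $E$ a real Banach space. Then $PJ(G;E)=\mathrm{Hom}(G;E)$.
   Context: $PJ(G;E)$ is the set of functions $f\colon G\to E$ such that there is $c>0$ with $\|f(xy)+f(xy^{-1})-2f(x)\|\le c$ for all $x,y\in G$ and $f(x^n)=nf(x)$ for all $x\in G$, $n\in\mathbb{Z}$. $\mathrm{Hom}(G;E)$ is the set of homomorphisms from $G$ to the additive group of $E$. *)

theory Defs
  imports "HOL-Analysis.Analysis"
begin

text \<open>The abelian group G is written additively (type class ab_group_add).
  zscale n x is the n-th power of x in G, i.e. n x for n an integer.\<close>

definition zscale :: "int \<Rightarrow> 'g::ab_group_add \<Rightarrow> 'g" where
  "zscale n x = (if 0 \<le> n then ((\<lambda>y. y + x) ^^ nat n) 0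
                 else - (((\<lambda>y. y + x) ^^ nat (- n)) 0))"

definition PJ :: "('g::ab_group_add \<Rightarrow> 'e::real_normed_vector) set" where
  "PJ = {f. (\<exists>c>0. \<forall>x y. norm (f (x + y) + f (x - y) - 2 *\<^sub>R f x) \<le> c)
            \<and> (\<forall>x. \<forall>n::int. f (zscale n x) = of_int n *\<^sub>R f x)}"

definition Hom :: "('g::ab_group_add \<Rightarrow> 'e::real_normed_vector) set" where
  "Hom = {f. \<forall>x y. f (x + y) = f x + f y}"

end

theory Submission
  imports Defs
begin

text \<open>A map f in PJ is homogeneous, so its Jensen defect
  f(x + y) + f(x - y) - 2 f(x) at (k x, k y) is k times the defect at (x, y). Being bounded,
  the defect must vanish. Then f(x + y) + f(x - y) = 2 f(x), and adding the same identity with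
  x and y swapped (f is odd, since f(0) = 0) gives additivity. Conversely an additive map is
  homogeneous and has zero defect.\<close>

lemma zscale_0_left [simp]: "zscale 0 x = 0"
  by (simp add: zscale_def)

lemma zscale_one_plus_of_nat: "zscale (1 + int k) x = zscale (int k) x + x"
  by (simp add: zscale_def nat_add_distrib)

lemma zscale_minus_of_nat: "zscale (- int k) x = - zscale (int k) x"
  by (cases "k = 0") (simp_all add: zscale_def)

lemma zscale_of_nat_add: "zscale (int k) (x + y) = zscale (int k) x + zscale (int k) y"
  by (induction k) (simp_all add: zscale_one_plus_of_nat algebra_simps)

lemma zscale_add: "zscale n (x + y) = zscale n x + zscale n y"
  by (cases n rule: int_cases2) (simp_all add: zscale_minus_of_nat zscale_of_nat_add)

lemma zscale_diff: "zscale n (x - y) = zscale n x - zscale n y"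
  using zscale_add [of n "x - y" y] by (simp add: algebra_simps)

text \<open>The locale of additive maps is written Modules.additive because HOL-Analysis
  reuses the name additive for set functions.\<close>

lemma additive_zscale:
  fixes f :: "'g::ab_group_add \<Rightarrow> 'e::real_vector"
  assumes "Modules.additive f"
  shows "f (zscale n x) = of_int n *\<^sub>R f x"
proof -
  interpret additive f by fact
  have of_nat_case: "f (zscale (int k) x) = real k *\<^sub>R f x" for k
    by (induction k) (simp_all add: zscale_one_plus_of_nat add zero algebra_simps)
  show ?thesis
    by (cases n rule: int_cases2) (simp_all add: zscale_minus_of_nat minus of_nat_case)
qed

lemma additive_iff_jensen:
  fixes f :: "'g::ab_group_add \<Rightarrow> 'e::real_vector"
  shows "Modules.additive f \<longleftrightarrow> f 0 = 0 \<and> (\<forall>x y. f (x + y) + f (x - y) = 2 *\<^sub>R f x)"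
proof
  assume "Modules.additive f"
  then interpret additive f .
  show "f 0 = 0 \<and> (\<forall>x y. f (x + y) + f (x - y) = 2 *\<^sub>R f x)"
    by (simp add: zero add diff scaleR_2)
next
  assume "f 0 = 0 \<and> (\<forall>x y. f (x + y) + f (x - y) = 2 *\<^sub>R f x)"
  then have f0: "f 0 = 0" and jensen: "\<And>x y. f (x + y) + f (x - y) = 2 *\<^sub>R f x"
    by auto
  have odd: "f (- x) = - f x" for x
    using jensen [of 0 x] f0 by (simp add: eq_neg_iff_add_eq_0 add.commute)
  have "2 *\<^sub>R f (x + y) = 2 *\<^sub>R (f x + f y)" for x y
  proof -
    have "f (x + y) - f (x - y) = 2 *\<^sub>R f y"
      using jensen [of y x] odd [of "x - y"] by (simp add: add.commute)
    with jensen [of x y] show ?thesis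
      by (simp add: scaleR_2 algebra_simps)
  qed
  then show "Modules.additive f"
    by (simp add: Modules.additive_def)
qed

lemma bounded_multiples_imp_zero:
  fixes v :: "'e::real_normed_vector"
  assumes "\<And>k::nat. norm (real k *\<^sub>R v) \<le> c"
  shows "v = 0"
proof (rule ccontr)
  assume "v \<noteq> 0"
  obtain k :: nat where "c / norm v < real k"
    using reals_Archimedean2 by blast
  with \<open>v \<noteq> 0\<close> have "c < real k * norm v"
    by (simp add: field_simps)
  with assms [of k] show False
    by simp
qed

lemma bounded_jensen_defect_vanishes:
  fixes f :: "'g::ab_group_add \<Rightarrow> 'e::real_normed_vector"
  assumes bounded: "\<And>x y. norm (f (x + y) + f (x - y) - 2 *\<^sub>R f x) \<le> c"
    and homogeneous: "\<And>k x. f (zscale (int k) x) = real k *\<^sub>R f x"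
  shows "f (x + y) + f (x - y) = 2 *\<^sub>R f x"
proof -
  define defect where "defect = f (x + y) + f (x - y) - 2 *\<^sub>R f x"
  have "real k *\<^sub>R defect =
      f (zscale (int k) x + zscale (int k) y) + f (zscale (int k) x - zscale (int k) y)
      - 2 *\<^sub>R f (zscale (int k) x)" for k
    by (simp add: defect_def zscale_add [symmetric] zscale_diff [symmetric] homogeneous
        algebra_simps)
  then have "norm (real k *\<^sub>R defect) \<le> c" for k
    by (simp only: bounded)
  then have "defect = 0"
    by (rule bounded_multiples_imp_zero)
  then show ?thesis
    by (simp add: defect_def)
qed

lemma Hom_eq_additive: "Hom = {f. Modules.additive f}"
  by (simp add: Hom_def Modules.additive_def)

lemma PJ_subset_Hom: "(PJ :: ('g::ab_group_add \<Rightarrow> 'e::real_normed_vector) set) \<subseteq> Hom"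
proof
  fix f :: "'g \<Rightarrow> 'e"
  assume "f \<in> PJ"
  then obtain c where bounded: "\<And>x y. norm (f (x + y) + f (x - y) - 2 *\<^sub>R f x) \<le> c"
    and homogeneous: "\<And>n x. f (zscale n x) = of_int n *\<^sub>R f x"
    unfolding PJ_def by blast
  have "f 0 = 0"
    using homogeneous [of 0 0] by simp
  moreover have "f (x + y) + f (x - y) = 2 *\<^sub>R f x" for x y
    by (rule bounded_jensen_defect_vanishes [OF bounded]) (simp add: homogeneous)
  ultimately show "f \<in> Hom"
    by (simp add: Hom_eq_additive additive_iff_jensen)
qed

lemma Hom_subset_PJ: "(Hom :: ('g::ab_group_add \<Rightarrow> 'e::real_normed_vector) set) \<subseteq> PJ"
proof
  fix f :: "'g \<Rightarrow> 'e"
  assume "f \<in> Hom"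
  then have "Modules.additive f"
    by (simp add: Hom_eq_additive)
  then have "norm (f (x + y) + f (x - y) - 2 *\<^sub>R f x) \<le> 1" for x y
    by (simp add: additive_iff_jensen)
  with \<open>Modules.additive f\<close> show "f \<in> PJ"
    unfolding PJ_def using zero_less_one by (blast intro: additive_zscale)
qed

theorem corollary2p17:
  shows "(PJ :: ('g::ab_group_add \<Rightarrow> 'e::banach) set) = Hom"
  using PJ_subset_Hom Hom_subset_PJ by (rule subset_antisym)

end
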